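(* There exists a function $f(n,w,d)$ such that for all positive integers $n,w,d$ the following holds. Let $G$ be a connected graph with $\Delta(G)\leq d$ and let $(T,\mathcal{Y})$ be a lean tree-decomposition of $G$ of width at most $w$. If $|V(G)|\geq f(n,w,d)$, then $T$ contains a path $P$ with interior vertices $t_1,\ldots,t_n$, occurring along $P$ in this order, such that: (i) for some positive integer $s\leq w+1$, $|Y_{t_i}|=s$ for all $i\in[n]$ and $|Y_t|\geq s$ for every vertex $t$ of $P$ between $t_1$ and $t_n$; and (ii) there is a set $U\subseteq V(G)$ with $Y_{t_i}\cap Y_{t_j}=U$ for all distinct $i,j\in[n]$.
   Context: All graphs are finite and loopless but may have parallel edges; $[n]=\{1,\dots,n\}$. A tree-decomposition of $G$ is a pair $(T,\mathcal{Y})$ where $T$ is a tree and $\mathcal{Y}=\{Y_t\}_{t\in V(T)}$ is a family of subsets of $V(G)$ (bags) such that (W1) $\bigcup_{t} Y_t=V(G)$ and every edge of $G$ has both ends in some $Y_t$; and (W2) if $t'$ lies on the path of $T$ between $t$ and $t''$ then $Y_t\cap Y_{t''}\subseteq Y_{t'}$. Its width is $\max_t(|Y_t|-1)$. It is lean if additionally: (W3) for every two vertices $t,t'$ of $T$ and every positive integer $k$, either $G$ has $k$ vertex-disjoint paths between $Y_t$ and $Y_{t'}$, or some vertex $t''$ on the path of $T$ between $t$ and $t'$ has $|Y_{t''}|<k$; (W4) distinct vertices $t\ne t'$ of $T$ have $Y_t\neq Y_{t'}$; (W5) if $t_0\in V(T)$ and $B$ is a component of $T-t_0$, then $\bigcup_{t\in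 V(B)}Y_t\setminus Y_{t_0}\neq\emptyset$. *)

theory Defs
  imports Main
begin

definition is_path :: "('a \<Rightarrow> 'a \<Rightarrow> bool) \<Rightarrow> 'a set \<Rightarrow> 'a list \<Rightarrow> bool" where
  "is_path adj S xs \<longleftrightarrow> xs \<noteq> [] \<and> distinct xs \<and> set xs \<subseteq> S \<and>
     (\<forall>i. Suc i < length xs \<longrightarrow> adj (xs ! i) (xs ! Suc i))"

text \<open>Multigraphs (parallel edges allowed, loopless): vertex set V, edge set E,
  and ends e = the set of the two ends of edge e.\<close>
definition multigraph :: "'v set \<Rightarrow> 'e set \<Rightarrow> ('e \<Rightarrow> 'v set) \<Rightarrow> bool" where
  "multigraph V E ends \<longleftrightarrow> finite V \<and> finite E \<and>
     (\<forall>e\<in>E. ends e \<subseteq> V \<and> card (ends e) = 2)"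

definition gadj :: "'e set \<Rightarrow> ('e \<Rightarrow> 'v set) \<Rightarrow> 'v \<Rightarrow> 'v \<Rightarrow> bool" where
  "gadj E ends x y \<longleftrightarrow> (\<exists>e\<in>E. ends e = {x, y})"

definition degree :: "'e set \<Rightarrow> ('e \<Rightarrow> 'v set) \<Rightarrow> 'v \<Rightarrow> nat" where
  "degree E ends v = card {e\<in>E. v \<in> ends e}"

definition max_degree_le :: "'v set \<Rightarrow> 'e set \<Rightarrow> ('e \<Rightarrow> 'v set) \<Rightarrow> nat \<Rightarrow> bool" where
  "max_degree_le V E ends d \<longleftrightarrow> (\<forall>v\<in>V. degree E ends v \<le> d)"

definition connected_graph :: "'v set \<Rightarrow> 'e set \<Rightarrow> ('e \<Rightarrow> 'v set) \<Rightarrow> bool" where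
  "connected_graph V E ends \<longleftrightarrow> V \<noteq> {} \<and>
     (\<forall>u\<in>V. \<forall>v\<in>V. \<exists>xs. is_path (gadj E ends) V xs \<and> hd xs = u \<and> last xs = v)"

definition disjoint_paths :: "'v set \<Rightarrow> 'e set \<Rightarrow> ('e \<Rightarrow> 'v set) \<Rightarrow> nat \<Rightarrow> 'v set \<Rightarrow> 'v set \<Rightarrow> bool" where
  "disjoint_paths V E ends k A B \<longleftrightarrow> (\<exists>Ps. length Ps = k \<and>
     (\<forall>P\<in>set Ps. is_path (gadj E ends) V P \<and> hd P \<in> A \<and> last P \<in> B) \<and>
     (\<forall>i<k. \<forall>j<k. i \<noteq> j \<longrightarrow> set (Ps ! i) \<inter> set (Ps ! j) = {}))"

definition is_tree :: "'i set \<Rightarrow> ('i \<Rightarrow> 'i \<Rightarrow> bool) \<Rightarrow> bool" where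
  "is_tree I TE \<longleftrightarrow> finite I \<and> I \<noteq> {} \<and>
     (\<forall>x y. TE x y \<longrightarrow> x \<in> I \<and> y \<in> I \<and> x \<noteq> y \<and> TE y x) \<and>
     (\<forall>u\<in>I. \<forall>v\<in>I. \<exists>xs. is_path TE I xs \<and> hd xs = u \<and> last xs = v) \<and>
     \<not> (\<exists>xs. is_path TE I xs \<and> length xs \<ge> 3 \<and> TE (last xs) (hd xs))"

definition on_tree_path :: "'i set \<Rightarrow> ('i \<Rightarrow> 'i \<Rightarrow> bool) \<Rightarrow> 'i \<Rightarrow> 'i \<Rightarrow> 'i \<Rightarrow> bool" where
  "on_tree_path I TE t t'' t' \<longleftrightarrow>
     (\<exists>xs. is_path TE I xs \<and> hd xs = t \<and> last xs = t'' \<and> t' \<in> set xs)"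

definition tree_decomposition ::
  "'v set \<Rightarrow> 'e set \<Rightarrow> ('e \<Rightarrow> 'v set) \<Rightarrow> 'i set \<Rightarrow> ('i \<Rightarrow> 'i \<Rightarrow> bool) \<Rightarrow> ('i \<Rightarrow> 'v set) \<Rightarrow> bool" where
  "tree_decomposition V E ends I TE Y \<longleftrightarrow> is_tree I TE \<and>
     (\<Union>t\<in>I. Y t) = V \<and> (\<forall>e\<in>E. \<exists>t\<in>I. ends e \<subseteq> Y t) \<and>
     (\<forall>t\<in>I. \<forall>t''\<in>I. \<forall>t'. on_tree_path I TE t t'' t' \<longrightarrow> Y t \<inter> Y t'' \<subseteq> Y t')"

definition td_width_le :: "'i set \<Rightarrow> ('i \<Rightarrow> 'v set) \<Rightarrow> nat \<Rightarrow> bool" where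
  "td_width_le I Y w \<longleftrightarrow> (\<forall>t\<in>I. card (Y t) \<le> w + 1)"

definition tree_minus_components :: "'i set \<Rightarrow> ('i \<Rightarrow> 'i \<Rightarrow> bool) \<Rightarrow> 'i \<Rightarrow> 'i set set" where
  "tree_minus_components I TE t0 =
     {{u\<in>I - {t0}. \<exists>xs. is_path TE (I - {t0}) xs \<and> hd xs = t \<and> last xs = u} | t. t \<in> I - {t0}}"

definition lean_tree_decomposition ::
  "'v set \<Rightarrow> 'e set \<Rightarrow> ('e \<Rightarrow> 'v set) \<Rightarrow> 'i set \<Rightarrow> ('i \<Rightarrow> 'i \<Rightarrow> bool) \<Rightarrow> ('i \<Rightarrow> 'v set) \<Rightarrow> bool" where
  "lean_tree_decomposition V E ends I TE Y \<longleftrightarrow> tree_decomposition V E ends I TE Y \<and>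
     (\<forall>t\<in>I. \<forall>t'\<in>I. \<forall>k>0. disjoint_paths V E ends k (Y t) (Y t') \<or>
        (\<exists>t''. on_tree_path I TE t t' t'' \<and> card (Y t'') < k)) \<and>
     (\<forall>t\<in>I. \<forall>t'\<in>I. t \<noteq> t' \<longrightarrow> Y t \<noteq> Y t') \<and>
     (\<forall>t0\<in>I. \<forall>B\<in>tree_minus_components I TE t0. (\<Union>t\<in>B. Y t) - Y t0 \<noteq> {})"

end

theory Submission
  imports Defs
begin

text \<open>Bounded degree and bounded width force the tree of the decomposition to have bounded
  degree (condition (W5) makes every branch at a node contribute a private vertex, which is
  joined to the node's bag by an edge), so a huge graph yields a huge tree and hence a long
  path in it. Along this path the bag sizes lie in $[1, w+1]$; a nested pigeonhole argument
  finds many nodes of equal bag size $s$ with no smaller bag between them. By (W2) their bags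
  form an interpolating family ($Y_{t_i} \cap Y_{t_k} \subseteq Y_{t_j}$ for $i < j < k$), and
  such families of bounded-size sets contain large sunflowers.\<close>

section \<open>Paths and reachability\<close>

lemma is_path_iff_successively:
  "is_path adj S xs \<longleftrightarrow> xs \<noteq> [] \<and> distinct xs \<and> set xs \<subseteq> S \<and> successively adj xs"
  unfolding is_path_def successively_conv_nth by blast

lemma walk_contains_path:
  "xs \<noteq> [] \<Longrightarrow> set xs \<subseteq> S \<Longrightarrow> successively adj xs \<Longrightarrow>
   \<exists>ys. is_path adj S ys \<and> hd ys = hd xs \<and> last ys = last xs"
proof (induction "length xs" arbitrary: xs rule: less_induct)
  case less
  show ?case
  proof (cases "distinct xs")
    case True
    thus ?thesis using less.prems by (auto simp: is_path_iff_successively)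
  next
    case False
    then obtain as bs cs y where xs: "xs = as @ [y] @ bs @ [y] @ cs"
      using not_distinct_decomp by blast
    let ?zs = "as @ [y] @ cs"
    have "successively adj ?zs"
      using less.prems(3) unfolding xs
      by (auto simp: successively_append_iff successively_Cons split: if_splits)
    moreover have "hd ?zs = hd xs" "last ?zs = last xs"
      unfolding xs by (cases as; simp) (cases cs; simp)
    moreover have "length ?zs < length xs" "set ?zs \<subseteq> set xs"
      unfolding xs by auto
    ultimately show ?thesis using less.hyps[of ?zs] less.prems by fastforce
  qed
qed

definition reach :: "('a \<Rightarrow> 'a \<Rightarrow> bool) \<Rightarrow> 'a set \<Rightarrow> 'a \<Rightarrow> 'a \<Rightarrow> bool" where
  "reach adj S u v \<longleftrightarrow> (\<exists>xs. is_path adj S xs \<and> hd xs = u \<and> last xs = v)"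

lemma reach_iff_walk:
  "reach adj S u v \<longleftrightarrow>
     (\<exists>xs. xs \<noteq> [] \<and> set xs \<subseteq> S \<and> successively adj xs \<and> hd xs = u \<and> last xs = v)"
  unfolding reach_def by (metis is_path_iff_successively walk_contains_path)

lemma reach_refl: "u \<in> S \<Longrightarrow> reach adj S u u"
  unfolding reach_iff_walk by (rule exI[of _ "[u]"]) simp

lemma reach_trans:
  assumes "reach adj S u v" "reach adj S v x"
  shows "reach adj S u x"
proof -
  obtain xs where xs: "xs \<noteq> []" "set xs \<subseteq> S" "successively adj xs" "hd xs = u" "last xs = v"
    using assms(1) unfolding reach_iff_walk by blast
  obtain ys where ys: "ys \<noteq> []" "set ys \<subseteq> S" "successively adj ys" "hd ys = v" "last ys = x"
    using assms(2) unfolding reach_iff_walk by blast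
  have "successively adj (xs @ tl ys)" "last (xs @ tl ys) = x"
    using xs ys by (cases ys; cases "tl ys"; auto simp: successively_append_iff)+
  moreover have "set (xs @ tl ys) \<subseteq> S"
    using xs(2) ys(2) by (cases ys) auto
  ultimately show ?thesis
    unfolding reach_iff_walk using xs(1,4) by (intro exI[of _ "xs @ tl ys"]) simp
qed

lemma reach_sym:
  assumes "symp adj" "reach adj S u v"
  shows "reach adj S v u"
proof -
  obtain xs where xs: "xs \<noteq> []" "set xs \<subseteq> S" "successively adj xs" "hd xs = u" "last xs = v"
    using assms(2) unfolding reach_iff_walk by blast
  have "successively adj (rev xs)"
    using xs(3) assms(1) by (simp add: successively_mono symp_def)
  thus ?thesis
    unfolding reach_iff_walk using xs by (intro exI[of _ "rev xs"]) (auto simp: hd_rev last_rev)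
qed

lemma on_tree_path_nth:
  assumes p: "is_path TE I xs" and ijk: "i \<le> j" "j \<le> k" "k < length xs"
  shows "on_tree_path I TE (xs ! i) (xs ! k) (xs ! j)"
proof -
  define zs where "zs = drop i (take (Suc k) xs)"
  have len: "length zs = Suc k - i" and nth: "\<And>l. l < length zs \<Longrightarrow> zs ! l = xs ! (i + l)"
    unfolding zs_def using ijk by auto
  have ne: "zs \<noteq> []" using len ijk by auto
  have "is_path TE I zs"
    unfolding is_path_def
  proof (intro conjI allI impI)
    show "zs \<noteq> []" by (fact ne)
    show "distinct zs" "set zs \<subseteq> I"
      using p unfolding is_path_def zs_def by (auto dest: in_set_dropD in_set_takeD)
    fix l assume l: "Suc l < length zs"
    hence "TE (xs ! (i + l)) (xs ! Suc (i + l))"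
      using p len ijk unfolding is_path_def by simp
    thus "TE (zs ! l) (zs ! Suc l)" using nth l by simp
  qed
  moreover have "hd zs = xs ! i" "last zs = xs ! k"
    using nth[of 0] nth[of "length zs - 1"] len ijk
    by (simp_all add: hd_conv_nth[OF ne] last_conv_nth[OF ne] Suc_diff_le)
  moreover have "xs ! j \<in> set zs"
    using nth[of "j - i"] len ijk nth_mem[of "j - i" zs] by simp
  ultimately show ?thesis unfolding on_tree_path_def by blast
qed

section \<open>Sunflowers and repeated minima\<close>

lemma greedy_independent_subset:
  fixes K :: "'i::linorder set"
  assumes "finite K" "0 < N" "r * N \<le> card K"
    and sparse: "\<forall>i\<in>K. card {j\<in>K. i < j \<and> R i j} < N"
  shows "\<exists>D\<subseteq>K. card D = r \<and> (\<forall>i\<in>D. \<forall>j\<in>D. i < j \<longrightarrow> \<not> R i j)"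
  using assms
proof (induction r arbitrary: K)
  case 0
  show ?case by (intro exI[of _ "{}"]) simp
next
  case (Suc r)
  hence "K \<noteq> {}" by auto
  define i0 where "i0 = Min K"
  have i0: "i0 \<in> K" "\<And>j. j \<in> K \<Longrightarrow> i0 \<le> j"
    using Suc.prems(1) \<open>K \<noteq> {}\<close> by (simp_all add: i0_def)
  define A where "A = {j\<in>K. i0 < j \<and> R i0 j}"
  define K' where "K' = K - insert i0 A"
  have "finite A" and "A \<subseteq> K" and "i0 \<notin> A" using Suc.prems(1) by (auto simp: A_def)
  moreover have "card A < N" using Suc.prems(4) i0(1) by (simp add: A_def)
  ultimately have "card (insert i0 A) \<le> N" by simp
  hence "r * N \<le> card K'"
    using Suc.prems(1,3) card_Diff_subset[of "insert i0 A" K] \<open>A \<subseteq> K\<close> i0(1)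
    by (simp add: K'_def \<open>finite A\<close>)
  moreover have "card {j\<in>K'. i < j \<and> R i j} < N" if "i \<in> K'" for i
  proof -
    have "card {j\<in>K'. i < j \<and> R i j} \<le> card {j\<in>K. i < j \<and> R i j}"
      using Suc.prems(1) by (intro card_mono) (auto simp: K'_def)
    thus ?thesis using Suc.prems(4) that by (fastforce simp: K'_def)
  qed
  ultimately obtain D where D: "D \<subseteq> K'" "card D = r" "\<forall>i\<in>D. \<forall>j\<in>D. i < j \<longrightarrow> \<not> R i j"
    using Suc.IH[of K'] Suc.prems(1,2) by (auto simp: K'_def)
  have "finite D" "i0 \<notin> D" using D(1) Suc.prems(1) finite_subset by (auto simp: K'_def)
  moreover have "\<not> R i0 j" if "j \<in> D" for j
    using that D(1) i0(2)[of j] by (force simp: K'_def A_def)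
  moreover have "\<not> R j i0" if "j \<in> D" "j < i0" for j
    using that D(1) i0(2)[of j] by (auto simp: K'_def)
  ultimately show ?case
    using D i0(1) by (intro exI[of _ "insert i0 D"]) (auto simp: K'_def)
qed

definition interpolating :: "'i::ord set \<Rightarrow> ('i \<Rightarrow> 'a set) \<Rightarrow> bool" where
  "interpolating K X \<longleftrightarrow> (\<forall>i\<in>K. \<forall>j\<in>K. \<forall>k\<in>K. i < j \<longrightarrow> j < k \<longrightarrow> X i \<inter> X k \<subseteq> X j)"

definition sunflower :: "'i set \<Rightarrow> ('i \<Rightarrow> 'a set) \<Rightarrow> 'a set \<Rightarrow> bool" where
  "sunflower K X U \<longleftrightarrow> (\<forall>i\<in>K. \<forall>j\<in>K. i \<noteq> j \<longrightarrow> X i \<inter> X j = U)"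

lemma interpolating_subset: "interpolating K X \<Longrightarrow> A \<subseteq> K \<Longrightarrow> interpolating A X"
  unfolding interpolating_def by blast

lemma interpolating_minus: "interpolating K X \<Longrightarrow> interpolating K (\<lambda>k. X k - C)"
  unfolding interpolating_def by blast

lemma sunflower_minus_core:
  "sunflower K (\<lambda>k. X k - C) U \<Longrightarrow> \<forall>k\<in>K. C \<subseteq> X k \<Longrightarrow> sunflower K X (U \<union> C)"
  unfolding sunflower_def by blast

lemma interpolating_common_core:
  fixes X :: "'i::linorder \<Rightarrow> 'a set"
  assumes "interpolating K X" "i \<in> K" "finite A" "A \<noteq> {}"
    and A: "A \<subseteq> {j\<in>K. i < j \<and> X i \<inter> X j \<noteq> {}}"
  shows "\<exists>C. C \<noteq> {} \<and> (\<forall>j\<in>A. C \<subseteq> X j)"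
proof (intro exI conjI ballI)
  let ?jm = "Max A"
  have jm: "?jm \<in> A" using Max_in[OF assms(3,4)] .
  show "X i \<inter> X ?jm \<noteq> {}" using A jm by blast
  fix j assume "j \<in> A"
  show "X i \<inter> X ?jm \<subseteq> X j"
  proof (cases "j = ?jm")
    case False
    hence "j < ?jm" using Max_ge[OF assms(3) \<open>j \<in> A\<close>] by simp
    thus ?thesis using assms(1,2) A \<open>j \<in> A\<close> jm unfolding interpolating_def by blast
  qed simp
qed

text \<open>Either some set meets many later ones, and these then all contain a common nonempty
  core, or greedily picked pairwise disjoint sets form a sunflower with empty core.\<close>
lemma interpolating_family_sunflower:
  fixes X :: "'i::linorder \<Rightarrow> 'a set"
  assumes "finite K" "0 < n" "n ^ Suc b \<le> card K"
    and "\<forall>k\<in>K. finite (X k) \<and> card (X k) \<le> b" "interpolating K X"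
  shows "\<exists>K'\<subseteq>K. card K' = n \<and> (\<exists>U. sunflower K' X U)"
  using assms
proof (induction b arbitrary: K X)
  case 0
  obtain K' where "K' \<subseteq> K" "card K' = n"
    using obtain_subset_with_card_n[of n K] "0.prems"(3) by auto
  moreover have "\<forall>k\<in>K. X k = {}" using "0.prems"(4) by auto
  ultimately show ?case unfolding sunflower_def by blast
next
  case (Suc b)
  define N where "N = n ^ Suc b"
  have "0 < N" using Suc.prems(2) by (simp add: N_def)
  show ?case
  proof (cases "\<exists>i\<in>K. N \<le> card {j\<in>K. i < j \<and> X i \<inter> X j \<noteq> {}}")
    case True
    then obtain i where i: "i \<in> K" and big: "N \<le> card {j\<in>K. i < j \<and> X i \<inter> X j \<noteq> {}}"
      by blast
    define A where "A = {j\<in>K. i < j \<and> X i \<inter> X j \<noteq> {}}"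
    have A: "finite A" "A \<subseteq> K" "N \<le> card A"
      using Suc.prems(1) big by (simp_all add: A_def)
    hence "A \<noteq> {}" using \<open>0 < N\<close> by auto
    then obtain C where C: "C \<noteq> {}" "\<forall>j\<in>A. C \<subseteq> X j"
      using interpolating_common_core[OF Suc.prems(5) i A(1)] A_def by blast
    have small: "\<forall>k\<in>A. finite (X k - C) \<and> card (X k - C) \<le> b"
    proof
      fix k assume "k \<in> A"
      hence X: "finite (X k)" "card (X k) \<le> Suc b" "C \<subseteq> X k"
        using Suc.prems(4) A(2) C(2) by auto
      hence "0 < card C" using C(1) by (meson card_gt_0_iff finite_subset)
      thus "finite (X k - C) \<and> card (X k - C) \<le> b"
        using X by (simp add: card_Diff_subset finite_subset)
    qed
    have "interpolating A (\<lambda>k. X k - C)"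
      using interpolating_minus interpolating_subset Suc.prems(5) A(2) by blast
    moreover have "n ^ Suc b \<le> card A" using A(3) by (simp add: N_def)
    ultimately obtain K' U where K': "K' \<subseteq> A" "card K' = n" "sunflower K' (\<lambda>k. X k - C) U"
      using Suc.IH[OF A(1) Suc.prems(2) _ small] by blast
    have "\<forall>k\<in>K'. C \<subseteq> X k" using K'(1) C(2) by blast
    hence "sunflower K' X (U \<union> C)" using sunflower_minus_core[OF K'(3)] by blast
    thus ?thesis using K'(1,2) A(2) by blast
  next
    case False
    hence sparse: "\<forall>i\<in>K. card {j\<in>K. i < j \<and> X i \<inter> X j \<noteq> {}} < N"
      by (simp add: not_le)
    have "n * N \<le> card K" using Suc.prems(3) by (simp add: N_def)
    then obtain D where D: "D \<subseteq> K" "card D = n" "\<forall>i\<in>D. \<forall>j\<in>D. i < j \<longrightarrow> X i \<inter> X j = {}"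
      using greedy_independent_subset[where R = "\<lambda>i j. X i \<inter> X j \<noteq> {}", OF Suc.prems(1) \<open>0 < N\<close>]
        sparse by auto
    have "sunflower D X {}"
      unfolding sunflower_def
    proof (intro ballI impI)
      fix i j assume "i \<in> D" "j \<in> D" "i \<noteq> j"
      thus "X i \<inter> X j = {}" using D(3) by (cases "i < j") (auto simp: Int_commute neq_iff)
    qed
    thus ?thesis using D(1,2) by blast
  qed
qed

lemma card_hits_if_no_free_window:
  assumes "\<forall>l. lo \<le> l \<and> l + R \<le> lo + len \<longrightarrow> (\<exists>k\<in>{l..<l+R}. P k)" "r * R \<le> len"
  shows "r \<le> card {k\<in>{lo..<lo+len}. P k}"
  using assms
proof (induction r arbitrary: lo len)
  case 0
  show ?case by simp
next
  case (Suc r)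
  have "R \<le> len" using Suc.prems(2) by simp
  then obtain k0 where k0: "k0 \<in> {lo..<lo+R}" "P k0" using Suc.prems(1) by auto
  have "r \<le> card {k\<in>{lo+R..<lo+R+(len-R)}. P k}"
    using Suc.prems \<open>R \<le> len\<close> by (intro Suc.IH) auto
  also have "\<dots> < card (insert k0 {k\<in>{lo+R..<lo+len}. P k})"
    using k0(1) \<open>R \<le> len\<close> by simp
  also have "\<dots> \<le> card {k\<in>{lo..<lo+len}. P k}"
    using k0 \<open>R \<le> len\<close> by (intro card_mono) auto
  finally show ?case by simp
qed

text \<open>Either the least possible value $p+1$ occurs in every window of length $m^{c-1}$,
  hence at least $m$ times, or some window avoids it and we recurse there.\<close>
lemma repeated_minimum_value:
  fixes g :: "nat \<Rightarrow> nat"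
  assumes "m ^ c \<le> len" "\<forall>k\<in>{lo..<lo+len}. p < g k \<and> g k \<le> p + c"
  shows "\<exists>s K. p < s \<and> K \<subseteq> {lo..<lo+len} \<and> card K = m \<and> (\<forall>k\<in>K. g k = s) \<and>
           (\<forall>i\<in>K. \<forall>j\<in>K. \<forall>k\<in>{i..j}. s \<le> g k)"
  using assms
proof (induction c arbitrary: p lo len)
  case 0
  hence "lo \<in> {lo..<lo+len}" by simp
  thus ?case using "0.prems"(2) by fastforce
next
  case (Suc c)
  define R where "R = m ^ c"
  show ?case
  proof (cases "\<exists>l. lo \<le> l \<and> l + R \<le> lo + len \<and> (\<forall>k\<in>{l..<l+R}. g k \<noteq> Suc p)")
    case True
    then obtain l where l: "lo \<le> l" "l + R \<le> lo + len" "\<forall>k\<in>{l..<l+R}. g k \<noteq> Suc p"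
      by blast
    have "Suc p < g k \<and> g k \<le> Suc p + c" if "k \<in> {l..<l+R}" for k
    proof -
      have "k \<in> {lo..<lo+len}" using l(1,2) that by auto
      thus ?thesis using Suc.prems(2) l(3) that by fastforce
    qed
    then obtain s K where "Suc p < s" "K \<subseteq> {l..<l+R}" "card K = m" "\<forall>k\<in>K. g k = s"
        "\<forall>i\<in>K. \<forall>j\<in>K. \<forall>k\<in>{i..j}. s \<le> g k"
      using Suc.IH[where p = "Suc p" and lo = l and len = R] by (auto simp: R_def)
    moreover have "{l..<l+R} \<subseteq> {lo..<lo+len}" using l by auto
    ultimately show ?thesis by (intro exI[of _ s] exI[of _ K]) auto
  next
    case False
    hence "m \<le> card {k\<in>{lo..<lo+len}. g k = Suc p}"
      using Suc.prems(1) by (intro card_hits_if_no_free_window[where R = R]) (auto simp: R_def)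
    then obtain K where K: "K \<subseteq> {k\<in>{lo..<lo+len}. g k = Suc p}" "card K = m"
      by (meson obtain_subset_with_card_n)
    have "Suc p \<le> g k" if "i \<in> K" "j \<in> K" "k \<in> {i..j}" for i j k
    proof -
      have "i \<in> {lo..<lo+len}" "j \<in> {lo..<lo+len}" using K(1) that(1,2) by auto
      hence "k \<in> {lo..<lo+len}" using that(3) by auto
      thus ?thesis using Suc.prems(2) by (simp add: Suc_le_eq)
    qed
    thus ?thesis using K by (intro exI[of _ "Suc p"] exI[of _ K]) auto
  qed
qed

lemma obtain_strict_mono_enumeration:
  fixes K :: "nat set"
  assumes "finite K" "card K = n"
  obtains idx where "\<forall>i\<in>{1..n}. idx i \<in> K"
    "\<forall>i\<in>{1..n}. \<forall>j\<in>{1..n}. i < j \<longrightarrow> idx i < idx j"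
proof -
  let ?ys = "sorted_list_of_set K"
  have ys: "length ?ys = n" "set ?ys = K" "sorted_wrt (<) ?ys"
    using assms by simp_all
  show thesis
  proof (rule that[of "\<lambda>i. ?ys ! (i - 1)"])
    show "\<forall>i\<in>{1..n}. ?ys ! (i - 1) \<in> K"
    proof
      fix i assume "i \<in> {1..n}"
      hence "i - 1 < length ?ys" using ys(1) by auto
      thus "?ys ! (i - 1) \<in> K" using ys(2) nth_mem by blast
    qed
    show "\<forall>i\<in>{1..n}. \<forall>j\<in>{1..n}. i < j \<longrightarrow> ?ys ! (i - 1) < ?ys ! (j - 1)"
    proof (intro ballI impI)
      fix i j assume "i \<in> {1..n}" "j \<in> {1..n}" "i < j"
      thus "?ys ! (i - 1) < ?ys ! (j - 1)"
        using sorted_wrt_nth_less[OF ys(3), of "i - 1" "j - 1"] ys(1) by auto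
    qed
  qed
qed

section \<open>Trees of bounded degree\<close>

definition walks_from :: "('a \<Rightarrow> 'a \<Rightarrow> bool) \<Rightarrow> 'a \<Rightarrow> nat \<Rightarrow> 'a list set" where
  "walks_from adj r k = {xs. length xs = Suc k \<and> hd xs = r \<and> successively adj xs}"

lemma walks_from_Suc_subset:
  "walks_from adj r (Suc k) \<subseteq> (\<Union>xs\<in>walks_from adj r k. (\<lambda>y. xs @ [y]) ` {y. adj (last xs) y})"
proof
  fix zs assume "zs \<in> walks_from adj r (Suc k)"
  hence len: "length zs = Suc (Suc k)" and "hd zs = r" "successively adj zs"
    unfolding walks_from_def by auto
  have ne: "zs \<noteq> []" and bne: "butlast zs \<noteq> []" using len by (cases zs; auto)+
  hence dec: "zs = butlast zs @ [last zs]" by simp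
  have "successively adj (butlast zs)" "adj (last (butlast zs)) (last zs)"
    using \<open>successively adj zs\<close> dec bne
    by (metis successively_append_iff list.distinct(1) list.sel(1))+
  moreover have "hd (butlast zs) = r" using \<open>hd zs = r\<close> bne dec by (metis hd_append2)
  ultimately have "butlast zs \<in> walks_from adj r k" using len unfolding walks_from_def by simp
  thus "zs \<in> (\<Union>xs\<in>walks_from adj r k. (\<lambda>y. xs @ [y]) ` {y. adj (last xs) y})"
    using \<open>adj (last (butlast zs)) (last zs)\<close> dec by blast
qed

lemma card_walks_from_le:
  assumes D: "\<forall>x. finite {y. adj x y} \<and> card {y. adj x y} \<le> D"
  shows "finite (walks_from adj r k) \<and> card (walks_from adj r k) \<le> D ^ k"
proof (induction k)
  case 0
  have "walks_from adj r 0 = {[r]}"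
    unfolding walks_from_def by (auto simp: length_Suc_conv)
  thus ?case by simp
next
  case (Suc k)
  let ?U = "\<Union>xs\<in>walks_from adj r k. (\<lambda>y. xs @ [y]) ` {y. adj (last xs) y}"
  have fin: "finite ?U" using Suc D by blast
  have "card (walks_from adj r (Suc k)) \<le> card ?U"
    by (rule card_mono[OF fin walks_from_Suc_subset])
  also have "\<dots> \<le> (\<Sum>xs\<in>walks_from adj r k. card ((\<lambda>y. xs @ [y]) ` {y. adj (last xs) y}))"
    by (rule card_UN_le) (use Suc in blast)
  also have "\<dots> \<le> card (walks_from adj r k) * D"
  proof (rule sum_bounded_above[where K = D, simplified])
    fix xs
    show "card ((\<lambda>y. xs @ [y]) ` {y. adj (last xs) y}) \<le> D"
      using card_image_le[of "{y. adj (last xs) y}" "\<lambda>y. xs @ [y]"] D by (meson order_trans)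
  qed
  also have "\<dots> \<le> D ^ Suc k" using Suc by (simp add: mult.commute)
  finally show ?case using finite_subset[OF walks_from_Suc_subset fin] by simp
qed

lemma card_le_if_paths_short:
  assumes D: "\<forall>x. finite {y. adj x y} \<and> card {y. adj x y} \<le> D"
    and r: "\<forall>u\<in>S. reach adj S r u"
    and short: "\<forall>xs. is_path adj S xs \<longrightarrow> length xs < L"
  shows "card S \<le> L * (D + 1) ^ L"
proof -
  have sub: "S \<subseteq> (\<Union>k<L. last ` walks_from adj r k)"
  proof
    fix u assume "u \<in> S"
    then obtain xs where xs: "is_path adj S xs" "hd xs = r" "last xs = u"
      using r unfolding reach_def by blast
    hence "xs \<in> walks_from adj r (length xs - 1)" "length xs < L"
      using short unfolding walks_from_def is_path_iff_successively by auto
    thus "u \<in> (\<Union>k<L. last ` walks_from adj r k)"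
      using xs(3) by (intro UN_I[of "length xs - 1"]) auto
  qed
  have "finite (\<Union>k<L. last ` walks_from adj r k)" using card_walks_from_le[OF D] by blast
  hence "card S \<le> card (\<Union>k<L. last ` walks_from adj r k)" by (rule card_mono[OF _ sub])
  also have "\<dots> \<le> (\<Sum>k<L. card (last ` walks_from adj r k))" by (rule card_UN_le) simp
  also have "\<dots> \<le> (\<Sum>k<L. (D + 1) ^ L)"
  proof (rule sum_mono)
    fix k assume "k \<in> {..<L}"
    have "card (last ` walks_from adj r k) \<le> card (walks_from adj r k)"
      using card_walks_from_le[OF D] card_image_le by blast
    also have "\<dots> \<le> D ^ k" using card_walks_from_le[OF D] by blast
    also have "\<dots> \<le> (D + 1) ^ k" by (rule power_mono) simp_all
    also have "\<dots> \<le> (D + 1) ^ L" using \<open>k \<in> {..<L}\<close> by (intro power_increasing) simp_all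
    finally show "card (last ` walks_from adj r k) \<le> (D + 1) ^ L" .
  qed
  finally show ?thesis by simp
qed

locale tree =
  fixes I :: "'i set" and TE :: "'i \<Rightarrow> 'i \<Rightarrow> bool"
  assumes is_tree: "is_tree I TE"
begin

lemma finite_vertices: "finite I"
  using is_tree unfolding is_tree_def by blast

lemma edge_vertices: "TE x y \<Longrightarrow> x \<in> I \<and> y \<in> I \<and> x \<noteq> y"
  using is_tree unfolding is_tree_def by blast

lemma edge_sym: "symp TE"
  using is_tree unfolding is_tree_def symp_def by blast

lemma reach_vertices: "u \<in> I \<Longrightarrow> v \<in> I \<Longrightarrow> reach TE I u v"
  using is_tree unfolding is_tree_def reach_def by blast

lemma finite_neighbours: "finite {y. TE x y}"
  using finite_subset[OF _ finite_vertices, of "{y. TE x y}"] edge_vertices by blast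

definition branch :: "'i \<Rightarrow> 'i \<Rightarrow> 'i set" where
  "branch t a = {u\<in>I - {t}. reach TE (I - {t}) a u}"

lemma branch_subset: "branch t a \<subseteq> I - {t}"
  unfolding branch_def by blast

lemma branch_self: "a \<in> I - {t} \<Longrightarrow> a \<in> branch t a"
  unfolding branch_def using reach_refl[of a "I - {t}" TE] by simp

lemma branch_eq:
  assumes "b \<in> branch t a"
  shows "branch t b = branch t a"
proof -
  have ab: "reach TE (I - {t}) a b" using assms unfolding branch_def by blast
  have ba: "reach TE (I - {t}) b a" using reach_sym[OF edge_sym ab] .
  show ?thesis unfolding branch_def using reach_trans[OF ab] reach_trans[OF ba] by blast
qed

lemma branch_in_tree_minus_components:
  "a \<in> I - {t} \<Longrightarrow> branch t a \<in> tree_minus_components I TE t"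
  unfolding tree_minus_components_def branch_def reach_def by (intro CollectI exI[of _ a]) simp

lemma path_through_cut_vertex:
  assumes "u \<in> I - {t}" "v \<in> I - {t}" "v \<notin> branch t u"
  shows "on_tree_path I TE u v t"
proof -
  obtain xs where xs: "is_path TE I xs" "hd xs = u" "last xs = v"
    using reach_vertices[of u v] assms(1,2) unfolding reach_def by blast
  have "t \<in> set xs"
  proof (rule ccontr)
    assume "t \<notin> set xs"
    hence "is_path TE (I - {t}) xs" using xs(1) unfolding is_path_iff_successively by blast
    thus False using xs assms(2,3) unfolding branch_def reach_def by blast
  qed
  thus ?thesis unfolding on_tree_path_def using xs by blast
qed

text \<open>A path between the two neighbours avoiding $t$ would close a cycle through $t$.\<close>
lemma neighbours_in_distinct_branches:
  assumes "TE t a" "TE t b" "a \<noteq> b"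
  shows "b \<notin> branch t a"
proof
  assume "b \<in> branch t a"
  then obtain xs where xs: "is_path TE (I - {t}) xs" "hd xs = a" "last xs = b"
    unfolding branch_def reach_def by blast
  have "xs \<noteq> []" "distinct xs" "set xs \<subseteq> I - {t}" "successively TE xs"
    using xs(1) unfolding is_path_iff_successively by auto
  moreover have "t \<in> I" using edge_vertices assms(1) by blast
  ultimately have "is_path TE I (t # xs)"
    using xs(2) assms(1) unfolding is_path_iff_successively by (cases xs) auto
  moreover have "length (t # xs) \<ge> 3"
  proof -
    have "length xs \<noteq> 1" using xs(2,3) assms(3) by (cases xs) auto
    moreover have "length xs \<noteq> 0" using \<open>xs \<noteq> []\<close> by simp
    ultimately show ?thesis by (simp; linarith)
  qed
  moreover have "TE (last (t # xs)) (hd (t # xs))"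
    using xs(3) \<open>xs \<noteq> []\<close> edge_sym assms(2) by (simp add: symp_def)
  ultimately show False using is_tree unfolding is_tree_def by blast
qed

lemma branches_of_neighbours_disjoint:
  assumes "TE t a" "TE t b" "a \<noteq> b" "c \<in> branch t b"
  shows "c \<notin> branch t a"
proof
  assume "c \<in> branch t a"
  hence "branch t b = branch t a" using branch_eq[OF assms(4)] branch_eq[of c t a] by argo
  moreover have "b \<in> branch t b" using edge_vertices[OF assms(2)] by (intro branch_self) auto
  ultimately show False using neighbours_in_distinct_branches[OF assms(1-3)] by argo
qed

end

section \<open>Decompositions with private branch vertices\<close>

text \<open>A path with $(n^{w+2})^{w+1}$ interior nodes suffices; trees of maximum degree
  $(w+1)d$ without such a path have at most $L((w+1)d+1)^L$ nodes.\<close>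
definition sunflower_path_bound :: "nat \<Rightarrow> nat \<Rightarrow> nat \<Rightarrow> nat" where
  "sunflower_path_bound n w d =
     (let L = (n ^ Suc (Suc w)) ^ Suc w + 2 in (w + 1) * (L * ((w + 1) * d + 1) ^ L) + 1)"

locale bounded_decomposition =
  fixes V :: "'v set" and E :: "'e set" and ends :: "'e \<Rightarrow> 'v set"
    and I :: "'i set" and TE :: "'i \<Rightarrow> 'i \<Rightarrow> bool" and Y :: "'i \<Rightarrow> 'v set"
    and w d :: nat
  assumes multigraph: "multigraph V E ends"
    and connected: "connected_graph V E ends"
    and max_degree: "max_degree_le V E ends d"
    and decomposition: "tree_decomposition V E ends I TE Y"
    and branches_not_covered:
      "\<forall>t0\<in>I. \<forall>B\<in>tree_minus_components I TE t0. (\<Union>t\<in>B. Y t) - Y t0 \<noteq> {}"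
    and width: "td_width_le I Y w"

sublocale bounded_decomposition \<subseteq> tree I TE
  using decomposition unfolding tree_decomposition_def by unfold_locales blast

context bounded_decomposition
begin

lemma vertices_eq: "V = (\<Union>t\<in>I. Y t)"
  using decomposition unfolding tree_decomposition_def by blast

lemma bag_subset: "t \<in> I \<Longrightarrow> Y t \<subseteq> V"
  using vertices_eq by blast

lemma finite_bag: "t \<in> I \<Longrightarrow> finite (Y t)"
  using bag_subset multigraph unfolding multigraph_def by (meson finite_subset)

lemma card_bag_le: "t \<in> I \<Longrightarrow> card (Y t) \<le> w + 1"
  using width unfolding td_width_le_def by blast

lemma edge_in_bag: "e \<in> E \<Longrightarrow> \<exists>t\<in>I. ends e \<subseteq> Y t"
  using decomposition unfolding tree_decomposition_def by blast

lemma bag_interpolation: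
  "t \<in> I \<Longrightarrow> t'' \<in> I \<Longrightarrow> on_tree_path I TE t t'' t' \<Longrightarrow> Y t \<inter> Y t'' \<subseteq> Y t'"
  using decomposition unfolding tree_decomposition_def by blast

definition part :: "'i \<Rightarrow> 'i \<Rightarrow> 'v set" where
  "part t a = (\<Union>c\<in>branch t a. Y c) - Y t"

lemma part_nonempty: "t \<in> I \<Longrightarrow> a \<in> I - {t} \<Longrightarrow> part t a \<noteq> {}"
  using branches_not_covered branch_in_tree_minus_components unfolding part_def by blast

lemma part_subset: "part t a \<subseteq> V"
  unfolding part_def using branch_subset bag_subset by blast

lemma common_vertex_in_cut_bag:
  assumes "t \<in> I" "b \<in> branch t a" "c \<in> I - {t}" "c \<notin> branch t a" "x \<in> Y b" "x \<in> Y c"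
  shows "x \<in> Y t"
proof -
  have "b \<in> I - {t}" using assms(2) branch_subset by blast
  moreover have "c \<notin> branch t b" using branch_eq[OF assms(2)] assms(4) by simp
  ultimately have "on_tree_path I TE b c t" using path_through_cut_vertex assms(3) by blast
  thus ?thesis using bag_interpolation \<open>b \<in> I - {t}\<close> assms(3,5,6) by blast
qed

lemma edge_from_part:
  assumes "t \<in> I" "x \<in> part t a" "e \<in> E" "ends e = {x, v}" "v \<notin> Y t"
  shows "v \<in> part t a"
proof -
  obtain c where c: "c \<in> I" "x \<in> Y c" "v \<in> Y c" using edge_in_bag assms(3,4) by blast
  obtain b where b: "b \<in> branch t a" "x \<in> Y b" "x \<notin> Y t"
    using assms(2) unfolding part_def by blast
  have "c \<in> branch t a"
  proof (rule ccontr)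
    assume "c \<notin> branch t a"
    moreover have "c \<noteq> t" using c(2) b(3) by blast
    ultimately show False using common_vertex_in_cut_bag[OF assms(1) b(1) _ _ b(2) c(2)] c(1) b(3)
      by blast
  qed
  thus ?thesis unfolding part_def using c(3) assms(5) by blast
qed

lemma walk_leaving_part:
  assumes "t \<in> I"
  shows "xs \<noteq> [] \<Longrightarrow> successively (gadj E ends) xs \<Longrightarrow> hd xs \<in> part t a \<Longrightarrow>
    last xs \<notin> part t a \<Longrightarrow> \<exists>e\<in>E. \<exists>x z. ends e = {x, z} \<and> x \<in> part t a \<and> z \<in> Y t"
proof (induction xs)
  case (Cons x ys)
  then obtain y zs where ys: "ys = y # zs" by (cases ys) auto
  then obtain e where e: "e \<in> E" "ends e = {x, y}"
    using Cons.prems(2) unfolding gadj_def by auto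
  show ?case
  proof (cases "y \<in> Y t")
    case False
    hence "y \<in> part t a" using edge_from_part[OF assms _ e] Cons.prems(3) by simp
    thus ?thesis using Cons.IH Cons.prems(2,4) ys by simp
  qed (use e Cons.prems(3) in auto)
qed simp

lemma parts_disjoint:
  assumes "TE t a" "TE t b" "a \<noteq> b"
  shows "part t a \<inter> part t b = {}"
proof -
  have "x \<in> Y t" if "b' \<in> branch t a" "x \<in> Y b'" "c \<in> branch t b" "x \<in> Y c" for x b' c
    using common_vertex_in_cut_bag[OF _ that(1) _ _ that(2,4)] edge_vertices[OF assms(1)]
      branches_of_neighbours_disjoint[OF assms that(3)] branch_subset that(3) by blast
  thus ?thesis unfolding part_def by blast
qed

text \<open>If $t$ has two neighbours $a \neq b$, a path of $G$ from the nonempty part at $a$ to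
  the one at $b$ must leave the former through an edge into $Y_t$.\<close>
lemma edge_between_part_and_bag:
  assumes "TE t a" "TE t b" "a \<noteq> b"
  shows "\<exists>e\<in>E. \<exists>x z. ends e = {x, z} \<and> x \<in> part t a \<and> z \<in> Y t"
proof -
  have t: "t \<in> I" and "a \<in> I - {t}" "b \<in> I - {t}" using edge_vertices assms(1,2) by auto
  then obtain x y where "x \<in> part t a" "y \<in> part t b" using part_nonempty by blast
  moreover obtain xs where "is_path (gadj E ends) V xs" "hd xs = x" "last xs = y"
    using connected part_subset calculation unfolding connected_graph_def by blast
  ultimately show ?thesis
    using walk_leaving_part[OF t] parts_disjoint[OF assms] unfolding is_path_iff_successively
    by blast
qed

lemma bag_nonempty: "TE t a \<Longrightarrow> TE t b \<Longrightarrow> a \<noteq> b \<Longrightarrow> Y t \<noteq> {}"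
  using edge_between_part_and_bag by blast

lemma card_edges_at_bag_le:
  assumes "t \<in> I"
  shows "card (\<Union>z\<in>Y t. {e\<in>E. z \<in> ends e}) \<le> (w + 1) * d"
proof -
  have "card (\<Union>z\<in>Y t. {e\<in>E. z \<in> ends e}) \<le> (\<Sum>z\<in>Y t. card {e\<in>E. z \<in> ends e})"
    using finite_bag[OF assms] by (rule card_UN_le)
  also have "\<dots> \<le> card (Y t) * d"
    using max_degree bag_subset[OF assms] sum_bounded_above[of "Y t" _ d]
    unfolding max_degree_le_def degree_def by (simp add: subset_iff)
  also have "\<dots> \<le> (w + 1) * d" by (rule mult_le_mono1[OF card_bag_le[OF assms]])
  finally show ?thesis .
qed

text \<open>Choosing for each neighbour $a$ of $t$ an edge from the part at $a$ into $Y_t$ is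
  injective, since the parts are disjoint and avoid $Y_t$.\<close>
lemma card_neighbours_le_card_edges_at_bag:
  assumes t: "t \<in> I" and two: "2 \<le> card {a. TE t a}"
  shows "card {a. TE t a} \<le> card (\<Union>z\<in>Y t. {e\<in>E. z \<in> ends e})"
proof -
  let ?N = "{a. TE t a}"
  have "\<exists>e\<in>E. \<exists>x z. ends e = {x, z} \<and> x \<in> part t a \<and> z \<in> Y t" if "a \<in> ?N" for a
  proof -
    have "\<not> card ?N \<le> Suc 0" using two by simp
    hence "\<not> (\<forall>x\<in>?N. \<forall>y\<in>?N. x = y)"
      using card_le_Suc0_iff_eq[OF finite_neighbours, of t] by blast
    then obtain b where "b \<in> ?N" "b \<noteq> a" using that by blast
    thus ?thesis using edge_between_part_and_bag that by blast
  qed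
  then obtain f where f: "\<And>a. a \<in> ?N \<Longrightarrow>
      f a \<in> E \<and> (\<exists>x z. ends (f a) = {x, z} \<and> x \<in> part t a \<and> z \<in> Y t)"
    by metis
  have "inj_on f ?N"
  proof (rule inj_onI)
    fix a b assume a: "a \<in> ?N" and b: "b \<in> ?N" and "f a = f b"
    obtain x z where x: "ends (f a) = {x, z}" "x \<in> part t a"
      using f[OF a] by blast
    obtain x' z' where x': "ends (f b) = {x', z'}" "x' \<in> part t b" "z' \<in> Y t"
      using f[OF b] by blast
    have "x \<notin> Y t" using x(2) unfolding part_def by blast
    hence "x = x'" using x(1) x' \<open>f a = f b\<close> by auto
    thus "a = b" using parts_disjoint a b x(2) x'(2) by blast
  qed
  hence "card ?N = card (f ` ?N)" by (rule card_image[symmetric])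
  also have "\<dots> \<le> card (\<Union>z\<in>Y t. {e\<in>E. z \<in> ends e})"
  proof (rule card_mono)
    show "finite (\<Union>z\<in>Y t. {e\<in>E. z \<in> ends e})"
      using finite_bag[OF t] multigraph unfolding multigraph_def by auto
    show "f ` ?N \<subseteq> (\<Union>z\<in>Y t. {e\<in>E. z \<in> ends e})" using f by blast
  qed
  finally show ?thesis .
qed

lemma card_neighbours_le:
  assumes "0 < d"
  shows "card {a. TE t a} \<le> (w + 1) * d"
proof (cases "2 \<le> card {a. TE t a}")
  case True
  then obtain a where "TE t a" by fastforce
  hence "t \<in> I" using edge_vertices by blast
  thus ?thesis
    using card_neighbours_le_card_edges_at_bag[OF _ True] card_edges_at_bag_le le_trans by blast
next
  case False
  thus ?thesis using assms by (simp add: le_trans[OF _ Suc_leI])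
qed

lemma card_vertices_le: "card V \<le> (w + 1) * card I"
proof -
  have "card V \<le> (\<Sum>t\<in>I. card (Y t))"
    unfolding vertices_eq by (rule card_UN_le[OF finite_vertices])
  also have "\<dots> \<le> card I * (w + 1)"
    using sum_bounded_above[of I "\<lambda>t. card (Y t)" "w + 1"] card_bag_le by simp
  finally show ?thesis by (simp add: mult.commute)
qed

lemma long_path_exists:
  assumes "0 < d" and big: "(w + 1) * (L * ((w + 1) * d + 1) ^ L) < card V"
  shows "\<exists>xs. is_path TE I xs \<and> L \<le> length xs"
proof (rule ccontr)
  assume "\<not> ?thesis"
  hence short: "\<forall>xs. is_path TE I xs \<longrightarrow> length xs < L" by auto
  obtain r where "r \<in> I" using is_tree unfolding is_tree_def by blast
  hence "card I \<le> L * ((w + 1) * d + 1) ^ L"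
    using card_le_if_paths_short[OF _ _ short] finite_neighbours card_neighbours_le[OF assms(1)]
      reach_vertices by blast
  thus False using card_vertices_le big by (meson le_trans mult_le_mono2 not_le)
qed

lemma path_interior_bag_nonempty:
  assumes "is_path TE I xs" "0 < k" "Suc k < length xs"
  shows "Y (xs ! k) \<noteq> {}"
proof (rule bag_nonempty)
  have "TE (xs ! i) (xs ! Suc i)" if "Suc i < length xs" for i
    using assms(1) that unfolding is_path_def by blast
  hence "TE (xs ! (k - 1)) (xs ! Suc (k - 1))" "TE (xs ! k) (xs ! Suc k)"
    using assms(3) by simp_all
  thus "TE (xs ! k) (xs ! (k - 1))" "TE (xs ! k) (xs ! Suc k)"
    using edge_sym assms(2) by (simp_all add: symp_def)
  show "xs ! (k - 1) \<noteq> xs ! Suc k"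
    using assms unfolding is_path_def by (simp add: nth_eq_iff_index_eq)
qed

lemma path_bags_interpolating:
  assumes "is_path TE I xs"
  shows "interpolating {..<length xs} (\<lambda>k. Y (xs ! k))"
  unfolding interpolating_def
proof (intro ballI impI)
  fix i j k assume "i \<in> {..<length xs}" "j \<in> {..<length xs}" "k \<in> {..<length xs}" "i < j" "j < k"
  moreover from this have "xs ! i \<in> I" "xs ! k \<in> I"
    using assms unfolding is_path_def by auto
  ultimately show "Y (xs ! i) \<inter> Y (xs ! k) \<subseteq> Y (xs ! j)"
    using bag_interpolation on_tree_path_nth[OF assms] by simp
qed

lemma sunflower_positions_on_path:
  assumes "0 < n" "0 < d" "sunflower_path_bound n w d \<le> card V"
  shows "\<exists>xs K s U. is_path TE I xs \<and> K \<subseteq> {1..<length xs - 1} \<and> card K = n \<and> 0 < s \<and>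
    (\<forall>k\<in>K. card (Y (xs ! k)) = s) \<and> (\<forall>i\<in>K. \<forall>j\<in>K. \<forall>k\<in>{i..j}. s \<le> card (Y (xs ! k))) \<and>
    sunflower K (\<lambda>k. Y (xs ! k)) U"
proof -
  define M where "M = (n ^ Suc (Suc w)) ^ Suc w"
  obtain xs where xs: "is_path TE I xs" "M + 2 \<le> length xs"
    using long_path_exists[OF assms(2), of "M + 2"] assms(3)
    by (auto simp: sunflower_path_bound_def M_def Let_def)
  have inner: "xs ! k \<in> I \<and> 0 < k \<and> Suc k < length xs" if "k \<in> {1..<1 + M}" for k
    using xs that unfolding is_path_def by auto
  have "(n ^ Suc (Suc w)) ^ (w + 1) \<le> M" by (simp add: M_def)
  moreover have "\<forall>k\<in>{1..<1 + M}. 0 < card (Y (xs ! k)) \<and> card (Y (xs ! k)) \<le> 0 + (w + 1)"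
    using inner path_interior_bag_nonempty[OF xs(1)] finite_bag card_bag_le
    by (simp add: card_gt_0_iff)
  ultimately have "\<exists>s K. 0 < s \<and> K \<subseteq> {1..<1 + M} \<and> card K = n ^ Suc (Suc w) \<and>
      (\<forall>k\<in>K. card (Y (xs ! k)) = s) \<and> (\<forall>i\<in>K. \<forall>j\<in>K. \<forall>k\<in>{i..j}. s \<le> card (Y (xs ! k)))"
    by (rule repeated_minimum_value)
  then obtain s K where s: "0 < s" and K: "K \<subseteq> {1..<1 + M}" "card K = n ^ Suc (Suc w)"
      "\<forall>k\<in>K. card (Y (xs ! k)) = s" "\<forall>i\<in>K. \<forall>j\<in>K. \<forall>k\<in>{i..j}. s \<le> card (Y (xs ! k))"
    by blast
  have fin: "finite K" using K(1) by (rule finite_subset) simp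
  have "K \<subseteq> {..<length xs}" using K(1) xs(2) by auto
  hence interp: "interpolating K (\<lambda>k. Y (xs ! k))"
    by (rule interpolating_subset[OF path_bags_interpolating[OF xs(1)]])
  have bounded: "\<forall>k\<in>K. finite (Y (xs ! k)) \<and> card (Y (xs ! k)) \<le> w + 1"
    using K(1) inner finite_bag card_bag_le by blast
  obtain K' U where K': "K' \<subseteq> K" "card K' = n" "sunflower K' (\<lambda>k. Y (xs ! k)) U"
    using interpolating_family_sunflower[OF fin assms(1) _ bounded interp] K(2) by auto
  moreover have "K \<subseteq> {1..<length xs - 1}" using xs(2) by (intro subset_trans[OF K(1)]) auto
  ultimately show ?thesis using xs(1) s K(3,4) by (intro exI[of _ xs] exI[of _ K']) blast
qed

lemma sunflower_path:
  assumes "0 < n" "0 < d" "sunflower_path_bound n w d \<le> card V"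
  shows "\<exists>xs (idx :: nat \<Rightarrow> nat). is_path TE I xs \<and>
         (\<forall>i\<in>{1..n}. 0 < idx i \<and> Suc (idx i) < length xs) \<and>
         (\<forall>i\<in>{1..n}. \<forall>j\<in>{1..n}. i < j \<longrightarrow> idx i < idx j) \<and>
         (\<exists>s. 0 < s \<and> s \<le> w + 1 \<and>
            (\<forall>i\<in>{1..n}. card (Y (xs ! idx i)) = s) \<and>
            (\<forall>k. idx 1 \<le> k \<and> k \<le> idx n \<longrightarrow> card (Y (xs ! k)) \<ge> s)) \<and>
         (\<exists>U \<subseteq> V. \<forall>i\<in>{1..n}. \<forall>j\<in>{1..n}. i \<noteq> j \<longrightarrow>
            Y (xs ! idx i) \<inter> Y (xs ! idx j) = U)"
proof -
  obtain xs K s U where xs: "is_path TE I xs" and K: "K \<subseteq> {1..<length xs - 1}" "card K = n"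
    and s: "0 < s" "\<forall>k\<in>K. card (Y (xs ! k)) = s"
      "\<forall>i\<in>K. \<forall>j\<in>K. \<forall>k\<in>{i..j}. s \<le> card (Y (xs ! k))"
    and U: "sunflower K (\<lambda>k. Y (xs ! k)) U"
    using sunflower_positions_on_path[OF assms] by blast
  obtain idx where idx: "\<forall>i\<in>{1..n}. idx i \<in> K"
    "\<forall>i\<in>{1..n}. \<forall>j\<in>{1..n}. i < j \<longrightarrow> idx i < idx j"
    using obtain_strict_mono_enumeration[OF finite_subset[OF K(1)] K(2)] by blast
  have idx_inner: "xs ! idx i \<in> I \<and> 0 < idx i \<and> Suc (idx i) < length xs" if "i \<in> {1..n}" for i
    using idx(1) K(1) xs that unfolding is_path_def by fastforce
  have first_last: "1 \<in> {1..n}" "n \<in> {1..n}" using assms(1) by auto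
  show ?thesis
  proof (intro exI[of _ xs] exI[of _ idx] conjI exI[of _ s] exI[of _ "U \<inter> V"])
    show "s \<le> w + 1"
      using s(2) idx(1) idx_inner[of 1] first_last card_bag_le by force
    show "\<forall>k. idx 1 \<le> k \<and> k \<le> idx n \<longrightarrow> s \<le> card (Y (xs ! k))"
      using s(3) idx(1) first_last by (meson atLeastAtMost_iff)
    show "\<forall>i\<in>{1..n}. \<forall>j\<in>{1..n}. i \<noteq> j \<longrightarrow> Y (xs ! idx i) \<inter> Y (xs ! idx j) = U \<inter> V"
    proof (intro ballI impI)
      fix i j assume ij: "i \<in> {1..n}" "j \<in> {1..n}" "i \<noteq> j"
      hence "idx i \<noteq> idx j" using idx(2) by (metis less_irrefl neqE)
      hence "Y (xs ! idx i) \<inter> Y (xs ! idx j) = U"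
        using U idx(1) ij unfolding sunflower_def by blast
      moreover have "Y (xs ! idx i) \<subseteq> V" using bag_subset idx_inner ij(1) by blast
      ultimately show "Y (xs ! idx i) \<inter> Y (xs ! idx j) = U \<inter> V" by blast
    qed
  qed (use xs idx_inner idx s in auto)
qed

end

lemma bounded_decomposition_if_lean:
  "multigraph V E ends \<Longrightarrow> connected_graph V E ends \<Longrightarrow> max_degree_le V E ends d \<Longrightarrow>
   lean_tree_decomposition V E ends I TE Y \<Longrightarrow> td_width_le I Y w \<Longrightarrow>
   bounded_decomposition V E ends I TE Y w d"
  unfolding lean_tree_decomposition_def by unfold_locales blast+

theorem lemma6p4:
  shows "\<exists>f :: nat \<Rightarrow> nat \<Rightarrow> nat \<Rightarrow> nat. \<forall>n w d. n > 0 \<and> w > 0 \<and> d > 0 \<longrightarrow>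
    (\<forall>(V :: nat set) (E :: nat set) (ends :: nat \<Rightarrow> nat set) (I :: nat set)
       (TE :: nat \<Rightarrow> nat \<Rightarrow> bool) (Y :: nat \<Rightarrow> nat set).
      multigraph V E ends \<and> connected_graph V E ends \<and> max_degree_le V E ends d \<and>
      lean_tree_decomposition V E ends I TE Y \<and> td_width_le I Y w \<and>
      card V \<ge> f n w d \<longrightarrow>
      (\<exists>xs (idx :: nat \<Rightarrow> nat). is_path TE I xs \<and>
         (\<forall>i\<in>{1..n}. 0 < idx i \<and> Suc (idx i) < length xs) \<and>
         (\<forall>i\<in>{1..n}. \<forall>j\<in>{1..n}. i < j \<longrightarrow> idx i < idx j) \<and>
         (\<exists>s. 0 < s \<and> s \<le> w + 1 \<and>
            (\<forall>i\<in>{1..n}. card (Y (xs ! idx i)) = s) \<and>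
            (\<forall>k. idx 1 \<le> k \<and> k \<le> idx n \<longrightarrow> card (Y (xs ! k)) \<ge> s)) \<and>
         (\<exists>U \<subseteq> V. \<forall>i\<in>{1..n}. \<forall>j\<in>{1..n}. i \<noteq> j \<longrightarrow>
            Y (xs ! idx i) \<inter> Y (xs ! idx j) = U)))"
  by (intro exI[of _ sunflower_path_bound] allI impI, elim conjE)
    (rule bounded_decomposition.sunflower_path[OF bounded_decomposition_if_lean])

end
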